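(* Let $\mathfrak{g}$ be the real Lie algebra whose dual has a basis $e^1,\dots,e^6$ with $de^1=de^2=de^3=de^4=0$, $de^5=e^1\wedge e^3+e^4\wedge e^2$, $de^6=e^1\wedge e^4+e^2\wedge e^3$. Let $\omega^1=e^1+ie^2$, $\omega^2=e^3+ie^4$, $\omega^3=e^5+ie^6$, and let $J_1$ be the complex structure on $\mathfrak{g}$ whose space of $(1,0)$-forms is $\langle\omega^1,\overline{\omega^2},\overline{\omega^3}\rangle$. Then the element $\theta\in\mathrm{Hom}(\Lambda^{1,0},\Lambda^{0,1})$ defined by $\theta(\omega^1)=\omega^3$, $\theta(\overline{\omega^2})=0$, $\theta(\overline{\omega^3})=0$ satisfies $\bar\partial\theta=0$, but $\theta$ is not tangent to $\mathcal{C}(\mathfrak{g})$ at $J_1$ (there is no differentiable path in $\mathcal{C}(\mathfrak{g})$ through $J_1$ with tangent vector $\theta$).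
   Context: $\mathcal{C}(\mathfrak{g})$ is the set of complex structures on $\mathfrak{g}$, i.e. linear $J$ with $J^2=-1$ and $[JX,JY]=[X,Y]+J[JX,Y]+J[X,JY]$; $d\alpha(X,Y)=-\alpha([X,Y])$ extended complex-linearly. Relative to $J_1$, $\Lambda^{1,0}=\langle\omega^1,\overline{\omega^2},\overline{\omega^3}\rangle$ and $\Lambda^{0,1}=\overline{\Lambda^{1,0}}$. Each complex structure $J$ is identified with its space of $(1,0)$-forms, a point of the Grassmannian of complex $3$-planes in $\mathfrak{g}^*_{\mathbb{C}}$; tangent vectors at $J$ are identified with $\mathrm{Hom}(\Lambda^{1,0},\Lambda^{0,1})$ via: if $\{\eta^1,\eta^2,\eta^3\}$ is a basis of $\Lambda^{1,0}$ and $\tau^i(t)\in\Lambda^{1,0}$ with $\tau^i(0)=0$, $\dot\tau^i(0)=\sigma^i$, the path $\langle\eta^i+\overline{\tau^i(t)}\rangle$ has tangent vector $\eta^i\mapsto\overline{\sigma^i}$. For $\theta\in\mathrm{Hom}(\Lambda^{1,0},\Lambda^{0,1})$, $(\bar\partial\theta)(\eta)=\bar\partial(\theta\eta)-\theta(\bar\partial\eta)$, where $\bar\partial$ of a $(1,0)$-form is the $(1,1)$-component of its $d$, $\bar\partial$ of a $(0,1)$-form is the $(0,2)$-component of its $d$, and $\theta(\alpha\wedge\bar\beta)=\theta(\alpha)\wedge\bar\beta$ for $\alpha\in\Lambda^{1,0},\bar\beta\in\Lambda^{0,1}$. *)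

theory Defs
  imports "HOL-Analysis.Analysis"
begin

text \<open>The Lie algebra g = R^6 with basis e_1..e_6 (indices 1..6 of the numeral type 6).
  Vectors of g (and of its complexification g_C) are coefficient vectors w.r.t. e_1..e_6;
  (complex) 1-forms are coefficient vectors w.r.t. the dual basis e^1..e^6.\<close>

definition ev :: "'a::comm_ring_1 ^ 6 \<Rightarrow> 'a ^ 6 \<Rightarrow> 'a" where
  "ev \<alpha> X = (\<Sum>i\<in>UNIV. \<alpha> $ i * X $ i)"

definition wdg :: "6 \<Rightarrow> 6 \<Rightarrow> 'a::comm_ring_1 ^ 6 \<Rightarrow> 'a ^ 6 \<Rightarrow> 'a" where
  "wdg i j X Y = X $ i * Y $ j - X $ j * Y $ i"

definition de :: "6 \<Rightarrow> 'a::comm_ring_1 ^ 6 \<Rightarrow> 'a ^ 6 \<Rightarrow> 'a" where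
  "de k X Y = (if k = 5 then wdg 1 3 X Y + wdg 4 2 X Y
               else if k = 6 then wdg 1 4 X Y + wdg 2 3 X Y else 0)"

text \<open>The bracket determined by d alpha (X,Y) = - alpha([X,Y]) (complex-bilinear on g_C).\<close>
definition brk :: "'a::comm_ring_1 ^ 6 \<Rightarrow> 'a ^ 6 \<Rightarrow> 'a ^ 6" where
  "brk X Y = (\<chi> k. - de k X Y)"

definition d1 :: "complex ^ 6 \<Rightarrow> complex ^ 6 \<Rightarrow> complex ^ 6 \<Rightarrow> complex" where
  "d1 \<alpha> X Y = - ev \<alpha> (brk X Y)"

definition cstructs :: "(real ^ 6 ^ 6) set" where
  "cstructs = {J. J ** J = - mat 1 \<and>
     (\<forall>X Y. brk (J *v X) (J *v Y) = brk X Y + J *v brk (J *v X) Y + J *v brk X (J *v Y))}"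

definition cplx :: "real ^ 6 \<Rightarrow> complex ^ 6" where
  "cplx X = (\<chi> i. complex_of_real (X $ i))"

definition cvec :: "complex ^ 6 \<Rightarrow> complex ^ 6" where
  "cvec v = (\<chi> i. cnj (v $ i))"

definition L10 :: "real ^ 6 ^ 6 \<Rightarrow> (complex ^ 6) set" where
  "L10 J = {\<alpha>. \<forall>X. ev \<alpha> (cplx (J *v X)) = \<i> * ev \<alpha> (cplx X)}"

definition cspan3 :: "complex ^ 6 \<Rightarrow> complex ^ 6 \<Rightarrow> complex ^ 6 \<Rightarrow> (complex ^ 6) set" where
  "cspan3 u v w = {a *s u + b *s v + c *s w | a b c. True}"

definition om1 :: "complex ^ 6" where "om1 = (\<chi> i. if i = 1 then 1 else if i = 2 then \<i> else 0)"
definition om2 :: "complex ^ 6" where "om2 = (\<chi> i. if i = 3 then 1 else if i = 4 then \<i> else 0)"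
definition om3 :: "complex ^ 6" where "om3 = (\<chi> i. if i = 5 then 1 else if i = 6 then \<i> else 0)"

definition JC :: "real ^ 6 ^ 6 \<Rightarrow> complex ^ 6 \<Rightarrow> complex ^ 6" where
  "JC J X = (\<chi> i. \<Sum>j\<in>UNIV. complex_of_real (J $ i $ j) * X $ j)"
definition P10 :: "real ^ 6 ^ 6 \<Rightarrow> complex ^ 6 \<Rightarrow> complex ^ 6" where
  "P10 J X = (1/2) *s (X - \<i> *s JC J X)"
definition P01 :: "real ^ 6 ^ 6 \<Rightarrow> complex ^ 6 \<Rightarrow> complex ^ 6" where
  "P01 J X = (1/2) *s (X + \<i> *s JC J X)"

definition comp02 :: "real ^ 6 ^ 6 \<Rightarrow> (complex^6 \<Rightarrow> complex^6 \<Rightarrow> complex) \<Rightarrow> complex^6 \<Rightarrow> complex^6 \<Rightarrow> complex" where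
  "comp02 J \<Omega> X Y = \<Omega> (P01 J X) (P01 J Y)"
definition comp11 :: "real ^ 6 ^ 6 \<Rightarrow> (complex^6 \<Rightarrow> complex^6 \<Rightarrow> complex) \<Rightarrow> complex^6 \<Rightarrow> complex^6 \<Rightarrow> complex" where
  "comp11 J \<Omega> X Y = \<Omega> (P10 J X) (P01 J Y) + \<Omega> (P01 J X) (P10 J Y)"

text \<open>theta is encoded as a complex matrix Th acting on 1-forms (alpha |-> Th *v alpha),
  equal to theta on Lambda^{1,0} and zero on Lambda^{0,1}.  Its action on 2-forms
  (used on (1,1)-forms) is the derivation extension; on (1,1)-forms it satisfies
  theta(alpha wedge conj beta) = theta(alpha) wedge conj beta.\<close>
definition theta2 :: "complex ^ 6 ^ 6 \<Rightarrow> (complex^6 \<Rightarrow> complex^6 \<Rightarrow> complex) \<Rightarrow> complex^6 \<Rightarrow> complex^6 \<Rightarrow> complex" where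
  "theta2 Th \<Omega> X Y = \<Omega> (transpose Th *v X) Y + \<Omega> X (transpose Th *v Y)"

definition dbar_theta :: "real ^ 6 ^ 6 \<Rightarrow> complex ^ 6 ^ 6 \<Rightarrow> complex ^ 6 \<Rightarrow> complex^6 \<Rightarrow> complex^6 \<Rightarrow> complex" where
  "dbar_theta J Th \<eta> X Y = comp02 J (d1 (Th *v \<eta>)) X Y - theta2 Th (comp11 J (d1 \<eta>)) X Y"

text \<open>theta is tangent to C(g) at J (whose (1,0)-forms have basis eta1, eta2, eta3):
  there is a differentiable path t |-> <eta_i + conj(tau_i(t))> in C(g), tau_i(t) in Lambda^{1,0},
  tau_i(0) = 0, with tangent vector eta_i |-> conj(tau_i'(0)) equal to theta.\<close>
definition tangent_at :: "real ^ 6 ^ 6 \<Rightarrow> complex ^ 6 \<Rightarrow> complex ^ 6 \<Rightarrow> complex ^ 6 \<Rightarrow> complex ^ 6 ^ 6 \<Rightarrow> bool" where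
  "tangent_at J \<eta>1 \<eta>2 \<eta>3 Th \<longleftrightarrow>
    (\<exists>\<epsilon>>0. \<exists>\<tau>1 \<tau>2 \<tau>3 :: real \<Rightarrow> complex ^ 6. \<exists>\<sigma>1 \<sigma>2 \<sigma>3.
       (\<forall>t\<in>{-\<epsilon><..<\<epsilon>}. \<tau>1 t \<in> L10 J \<and> \<tau>2 t \<in> L10 J \<and> \<tau>3 t \<in> L10 J) \<and>
       \<tau>1 0 = 0 \<and> \<tau>2 0 = 0 \<and> \<tau>3 0 = 0 \<and>
       (\<forall>t\<in>{-\<epsilon><..<\<epsilon>}. \<tau>1 differentiable (at t) \<and> \<tau>2 differentiable (at t) \<and> \<tau>3 differentiable (at t)) \<and>
       (\<tau>1 has_vector_derivative \<sigma>1) (at 0) \<and> (\<tau>2 has_vector_derivative \<sigma>2) (at 0) \<and>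
       (\<tau>3 has_vector_derivative \<sigma>3) (at 0) \<and>
       cvec \<sigma>1 = Th *v \<eta>1 \<and> cvec \<sigma>2 = Th *v \<eta>2 \<and> cvec \<sigma>3 = Th *v \<eta>3 \<and>
       (\<forall>t\<in>{-\<epsilon><..<\<epsilon>}. \<exists>J'\<in>cstructs.
          L10 J' = cspan3 (\<eta>1 + cvec (\<tau>1 t)) (\<eta>2 + cvec (\<tau>2 t)) (\<eta>3 + cvec (\<tau>3 t))))"

end

theory Submission
  imports Defs
begin

text \<open>With respect to J1 the forms \<omega>1, conj \<omega>2, conj \<omega>3 are of type (1,0); moreover
  d\<omega>3 = \<omega>1 \<and> \<omega>2, d(conj \<omega>3) = conj \<omega>1 \<and> conj \<omega>2, and the other \<omega>'s are closed.
  For \<eta> = a\<omega>1 + b conj \<omega>2 + c conj \<omega>3 this gives \<theta>\<eta> = a\<omega>3, whose differential has no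
  (0,2)-part, while dbar \<eta> = c conj \<omega>1 \<and> conj \<omega>2 is killed by \<theta>; hence dbar \<theta> = 0.

  If J_t were a path of complex structures with (1,0)-forms \<omega>1 + conj \<tau>1(t), conj \<omega>2 + conj \<tau>2(t),
  conj \<omega>3 + conj \<tau>3(t), integrability would make their common kernel T^{0,1} closed under the
  bracket. Evaluating \<omega>1 + conj \<tau>1(t) on the bracket of two explicit vectors of that kernel
  gives -4 conj(c)^2, where c is the conj \<omega>3-coefficient of \<tau>1(t). So c vanishes along the
  path, and so does its derivative, which is the \<omega>3-coefficient of \<theta>(\<omega>1) = \<omega>3. The
  obstruction is quadratic in c, which is why the first-order condition dbar \<theta> = 0 misses it.\<close>

lemma exhaust_6:
  fixes x :: 6
  shows "x = 1 \<or> x = 2 \<or> x = 3 \<or> x = 4 \<or> x = 5 \<or> x = 6"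
proof (induct x)
  case (of_int z)
  then have "z = 0 \<or> z = 1 \<or> z = 2 \<or> z = 3 \<or> z = 4 \<or> z = 5" by fastforce
  then show ?case by auto
qed

lemma UNIV_6: "UNIV = {1, 2, 3, 4, 5, 6::6}"
  using exhaust_6 by auto

lemma sum_6: "sum f (UNIV::6 set) = f 1 + f 2 + f 3 + f 4 + f 5 + f 6"
  unfolding UNIV_6 by (simp add: ac_simps)

lemma matrix_vector_mult_uminus_right [simp]: "A *v (- x) = - (A *v (x::'a::ring_1^'n))"
  by (simp add: vec_eq_iff matrix_vector_mult_def sum_negf)

lemma vector_matrix_mult_uminus_right [simp]: "x v* (- A) = - (x v* (A::'a::ring_1^'n^'m))"
  by (simp add: vec_eq_iff vector_matrix_mult_def sum_negf)

lemma map_matrix_of_real_mult: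
  "map_matrix of_real (A ** B) = map_matrix of_real A ** (map_matrix of_real B :: 'a::real_algebra_1^'n^'m)"
  by (simp add: vec_eq_iff matrix_matrix_mult_def)

lemma ev_commute: "ev \<alpha> X = ev X \<alpha>"
  by (simp add: ev_def mult.commute)

lemma ev_add_left [simp]: "ev (\<alpha> + \<beta>) X = ev \<alpha> X + ev \<beta> X"
  by (simp add: ev_def sum.distrib algebra_simps)

lemma ev_add_right [simp]: "ev \<alpha> (X + Y) = ev \<alpha> X + ev \<alpha> Y"
  by (simp add: ev_def sum.distrib algebra_simps)

lemma ev_diff_right [simp]: "ev \<alpha> (X - Y) = ev \<alpha> X - ev \<alpha> Y"
  by (simp add: ev_def sum_subtractf algebra_simps)

lemma ev_smult_left [simp]: "ev (c *s \<alpha>) X = c * ev \<alpha> X"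
  by (simp add: ev_def sum_distrib_left algebra_simps)

lemma ev_smult_right [simp]: "ev \<alpha> (c *s X) = c * ev \<alpha> X"
  by (simp add: ev_def sum_distrib_left algebra_simps)

lemma ev_neg_left [simp]: "ev (- \<alpha>) X = - ev \<alpha> X"
  by (simp add: ev_def sum_negf)

lemma ev_neg_right [simp]: "ev \<alpha> (- X) = - ev \<alpha> X"
  by (simp add: ev_def sum_negf)

lemma ev_zero_left [simp]: "ev 0 X = 0"
  by (simp add: ev_def)

lemma ev_matrix_vector_mult: "ev \<alpha> (A *v X) = ev (\<alpha> v* A) X"
proof -
  have "ev \<alpha> (A *v X) = (\<Sum>i\<in>UNIV. \<Sum>j\<in>UNIV. \<alpha> $ i * A $ i $ j * X $ j)"
    by (simp add: ev_def matrix_vector_mult_def sum_distrib_left mult.assoc)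
  also have "\<dots> = (\<Sum>j\<in>UNIV. \<Sum>i\<in>UNIV. \<alpha> $ i * A $ i $ j * X $ j)"
    by (rule sum.swap)
  also have "\<dots> = ev (\<alpha> v* A) X"
    by (simp add: ev_def vector_matrix_mult_def sum_distrib_right)
  finally show ?thesis .
qed

lemma ev_vector_matrix_mult: "ev \<alpha> (X v* A) = ev (A *v \<alpha>) X"
  by (metis ev_commute ev_matrix_vector_mult)

lemma ev_axis: "ev \<alpha> (axis j 1) = \<alpha> $ j"
  by (simp add: ev_def axis_def if_distrib sum.delta cong: if_cong)

lemma ev_eq_0_imp_eq_0:
  assumes "\<And>\<alpha>. ev \<alpha> U = 0"
  shows "U = 0"
  using assms[of "axis _ 1"] by (simp add: vec_eq_iff ev_commute[of "axis _ 1"] ev_axis)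

lemma cvec_add [simp]: "cvec (\<alpha> + \<beta>) = cvec \<alpha> + cvec \<beta>"
  by (simp add: vec_eq_iff cvec_def)

lemma cvec_smult [simp]: "cvec (c *s \<alpha>) = cnj c *s cvec \<alpha>"
  by (simp add: vec_eq_iff cvec_def)

lemma cvec_cvec [simp]: "cvec (cvec \<alpha>) = \<alpha>"
  by (simp add: vec_eq_iff cvec_def)

lemma ev_cvec_left: "ev (cvec \<alpha>) X = cnj (ev \<alpha> (cvec X))"
  by (simp add: ev_def cvec_def)

lemma cvec_vector_matrix_mult_real:
  "cvec (\<alpha> v* map_matrix of_real J) = cvec \<alpha> v* map_matrix of_real J"
  by (simp add: vec_eq_iff cvec_def vector_matrix_mult_def)

lemma cplx_matrix_vector_mult: "cplx (J *v X) = map_matrix of_real J *v cplx X"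
  by (simp add: vec_eq_iff cplx_def matrix_vector_mult_def)

lemma JC_eq: "JC J U = map_matrix of_real J *v U"
  by (simp add: vec_eq_iff JC_def matrix_vector_mult_def)

lemma cplx_axis: "cplx (axis j 1) = axis j 1"
  by (simp add: vec_eq_iff cplx_def axis_def)

lemma L10_iff: "\<alpha> \<in> L10 J \<longleftrightarrow> \<alpha> v* map_matrix of_real J = \<i> *s \<alpha>"
proof
  assume L: "\<alpha> \<in> L10 J"
  show "\<alpha> v* map_matrix of_real J = \<i> *s \<alpha>"
    unfolding vec_eq_iff
  proof
    fix j
    have "(\<alpha> v* map_matrix of_real J) $ j = ev \<alpha> (cplx (J *v axis j 1))"
      by (simp add: cplx_matrix_vector_mult ev_matrix_vector_mult cplx_axis ev_axis)
    also have "\<dots> = \<i> * \<alpha> $ j"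
      using L by (simp add: L10_def cplx_axis ev_axis)
    finally show "(\<alpha> v* map_matrix of_real J) $ j = (\<i> *s \<alpha>) $ j" by simp
  qed
next
  assume "\<alpha> v* map_matrix of_real J = \<i> *s \<alpha>"
  then show "\<alpha> \<in> L10 J"
    by (simp add: L10_def cplx_matrix_vector_mult ev_matrix_vector_mult)
qed

lemma cvec_L10_iff: "cvec \<alpha> \<in> L10 J \<longleftrightarrow> \<alpha> v* map_matrix of_real J = (- \<i>) *s \<alpha>"
  by (metis L10_iff cvec_cvec cvec_smult cvec_vector_matrix_mult_real complex_cnj_i
      complex_cnj_minus)

lemma ev_P10_L10: "\<alpha> \<in> L10 J \<Longrightarrow> ev \<alpha> (P10 J X) = ev \<alpha> X"
  by (simp add: P10_def JC_eq ev_matrix_vector_mult L10_iff algebra_simps)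

lemma ev_P01_L10: "\<alpha> \<in> L10 J \<Longrightarrow> ev \<alpha> (P01 J X) = 0"
  by (simp add: P01_def JC_eq ev_matrix_vector_mult L10_iff algebra_simps)

lemma ev_P10_cvec_L10: "cvec \<alpha> \<in> L10 J \<Longrightarrow> ev \<alpha> (P10 J X) = 0"
  by (simp add: P10_def JC_eq ev_matrix_vector_mult cvec_L10_iff algebra_simps)

lemma ev_P01_cvec_L10: "cvec \<alpha> \<in> L10 J \<Longrightarrow> ev \<alpha> (P01 J X) = ev \<alpha> X"
  by (simp add: P01_def JC_eq ev_matrix_vector_mult cvec_L10_iff algebra_simps)

definition wedge :: "complex^6 \<Rightarrow> complex^6 \<Rightarrow> complex^6 \<Rightarrow> complex^6 \<Rightarrow> complex" where
  "wedge \<alpha> \<beta> X Y = ev \<alpha> X * ev \<beta> Y - ev \<alpha> Y * ev \<beta> X"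

lemma comp02_wedge_L10: "\<alpha> \<in> L10 J \<Longrightarrow> comp02 J (wedge \<alpha> \<beta>) X Y = 0"
  by (simp add: comp02_def wedge_def ev_P01_L10)

lemma comp11_wedge_cvec_L10:
  "cvec \<alpha> \<in> L10 J \<Longrightarrow> \<beta> \<in> L10 J \<Longrightarrow> comp11 J (wedge \<alpha> \<beta>) X Y = wedge \<alpha> \<beta> X Y"
  by (simp add: comp11_def wedge_def ev_P10_L10 ev_P01_L10 ev_P10_cvec_L10 ev_P01_cvec_L10)

lemma theta2_wedge:
  "theta2 Th (wedge \<alpha> \<beta>) X Y = wedge (Th *v \<alpha>) \<beta> X Y + wedge \<alpha> (Th *v \<beta>) X Y"
  by (simp add: theta2_def wedge_def ev_vector_matrix_mult algebra_simps)

lemma wedge_zero_left [simp]: "wedge 0 \<beta> X Y = 0"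
  by (simp add: wedge_def)

lemma wedge_zero_right [simp]: "wedge \<alpha> 0 X Y = 0"
  by (simp add: wedge_def)

lemma d1_add [simp]: "d1 (\<alpha> + \<beta>) X Y = d1 \<alpha> X Y + d1 \<beta> X Y"
  by (simp add: d1_def)

lemma d1_smult [simp]: "d1 (c *s \<alpha>) X Y = c * d1 \<alpha> X Y"
  by (simp add: d1_def)

lemma ev_brk: "ev \<alpha> (brk X Y) = - d1 \<alpha> X Y"
  by (simp add: d1_def)

lemma d1_om:
  "d1 om1 X Y = 0" "d1 om2 X Y = 0" "d1 om3 X Y = wedge om1 om2 X Y"
  "d1 (cvec om1) X Y = 0" "d1 (cvec om2) X Y = 0"
  "d1 (cvec om3) X Y = wedge (cvec om1) (cvec om2) X Y"
  by (simp_all add: d1_def wedge_def ev_def sum_6 brk_def de_def wdg_def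
      om1_def om2_def om3_def cvec_def algebra_simps)

lemma ev_om_om [simp]:
  "ev om1 om1 = 0" "ev om1 om2 = 0" "ev om1 om3 = 0"
  "ev om2 om1 = 0" "ev om2 om2 = 0" "ev om2 om3 = 0"
  "ev om3 om1 = 0" "ev om3 om2 = 0" "ev om3 om3 = 0"
  by (simp_all add: ev_def sum_6 om1_def om2_def om3_def)

lemma ev_om_cvec_om [simp]:
  "ev om1 (cvec om1) = 2" "ev om1 (cvec om2) = 0" "ev om1 (cvec om3) = 0"
  "ev om2 (cvec om1) = 0" "ev om2 (cvec om2) = 2" "ev om2 (cvec om3) = 0"
  "ev om3 (cvec om1) = 0" "ev om3 (cvec om2) = 0" "ev om3 (cvec om3) = 2"
  by (simp_all add: ev_def sum_6 om1_def om2_def om3_def cvec_def)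

lemma dbar_theta_eq_0:
  assumes L: "L10 J = cspan3 om1 (cvec om2) (cvec om3)"
    and Th: "Th *v om1 = om3" "Th *v cvec om1 = 0" "Th *v cvec om2 = 0" "Th *v cvec om3 = 0"
    and \<eta>: "\<eta> \<in> L10 J"
  shows "dbar_theta J Th \<eta> X Y = 0"
proof -
  obtain a b c where \<eta>_eq: "\<eta> = a *s om1 + b *s cvec om2 + c *s cvec om3"
    using \<eta> L by (auto simp: cspan3_def)
  have om1: "om1 \<in> L10 J" and cvec_om2: "cvec om2 \<in> L10 J"
    unfolding L cspan3_def by (force intro: exI[of _ 1] exI[of _ 0])+
  have "Th *v \<eta> = a *s om3"
    using Th by (simp add: \<eta>_eq matrix_vector_right_distrib vector_scalar_commute)
  then have "comp02 J (d1 (Th *v \<eta>)) X Y = a * comp02 J (wedge om1 om2) X Y"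
    by (simp add: comp02_def d1_om)
  also have "\<dots> = 0"
    using om1 by (simp add: comp02_wedge_L10)
  finally have dbar_of_theta_\<eta>: "comp02 J (d1 (Th *v \<eta>)) X Y = 0" .
  have "theta2 Th (comp11 J (d1 \<eta>)) X Y = c * theta2 Th (comp11 J (wedge (cvec om1) (cvec om2))) X Y"
    by (simp add: theta2_def comp11_def \<eta>_eq d1_om algebra_simps)
  also have "\<dots> = c * theta2 Th (wedge (cvec om1) (cvec om2)) X Y"
    using om1 cvec_om2 by (simp add: theta2_def comp11_wedge_cvec_L10)
  also have "\<dots> = 0"
    using Th by (simp add: theta2_wedge)
  finally have theta_of_dbar_\<eta>: "theta2 Th (comp11 J (d1 \<eta>)) X Y = 0" .
  show ?thesis
    by (simp add: dbar_theta_def dbar_of_theta_\<eta> theta_of_dbar_\<eta>)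
qed

lemma brk_add_left [simp]: "brk (X + Y) Z = brk X Z + brk Y Z"
  by (simp add: vec_eq_iff brk_def de_def wdg_def algebra_simps)

lemma brk_add_right [simp]: "brk Z (X + Y) = brk Z X + brk Z Y"
  by (simp add: vec_eq_iff brk_def de_def wdg_def algebra_simps)

lemma brk_smult_left [simp]: "brk (c *s X) Z = c *s brk X Z"
  by (simp add: vec_eq_iff brk_def de_def wdg_def algebra_simps)

lemma brk_smult_right [simp]: "brk Z (c *s X) = c *s brk Z X"
  by (simp add: vec_eq_iff brk_def de_def wdg_def algebra_simps)

lemma brk_neg_left [simp]: "brk (- X) Z = - brk X Z"
  by (simp add: vec_eq_iff brk_def de_def wdg_def algebra_simps)

lemma brk_neg_right [simp]: "brk Z (- X) = - brk Z X"
  by (simp add: vec_eq_iff brk_def de_def wdg_def algebra_simps)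

lemma cplx_add: "cplx (X + Y) = cplx X + cplx Y"
  by (simp add: vec_eq_iff cplx_def)

lemma cplx_brk: "brk (cplx X) (cplx Y) = cplx (brk X Y)"
  by (simp add: vec_eq_iff brk_def de_def wdg_def cplx_def)

lemma cplx_decompose: "\<exists>X Y. U = cplx X + \<i> *s cplx Y"
proof -
  have "U = cplx (\<chi> i. Re (U $ i)) + \<i> *s cplx (\<chi> i. Im (U $ i))"
    by (simp add: vec_eq_iff cplx_def complex_eq_iff)
  then show ?thesis
    by blast
qed

definition nijenhuis :: "real^6^6 \<Rightarrow> complex^6 \<Rightarrow> complex^6 \<Rightarrow> complex^6" where
  "nijenhuis J U V = brk (JC J U) (JC J V) - brk U V - JC J (brk (JC J U) V) - JC J (brk U (JC J V))"

lemma nijenhuis_add_left: "nijenhuis J (U + U') V = nijenhuis J U V + nijenhuis J U' V"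
  by (simp add: nijenhuis_def JC_eq matrix_vector_right_distrib algebra_simps)

lemma nijenhuis_add_right: "nijenhuis J U (V + V') = nijenhuis J U V + nijenhuis J U V'"
  by (simp add: nijenhuis_def JC_eq matrix_vector_right_distrib algebra_simps)

lemma nijenhuis_smult_left: "nijenhuis J (c *s U) V = c *s nijenhuis J U V"
  by (simp add: nijenhuis_def JC_eq vector_scalar_commute vector_ssub_ldistrib)

lemma nijenhuis_smult_right: "nijenhuis J U (c *s V) = c *s nijenhuis J U V"
  by (simp add: nijenhuis_def JC_eq vector_scalar_commute vector_ssub_ldistrib)

lemma nijenhuis_cplx_eq_0:
  assumes "J \<in> cstructs"
  shows "nijenhuis J (cplx X) (cplx Y) = 0"
proof -
  have "brk (J *v X) (J *v Y) = brk X Y + J *v brk (J *v X) Y + J *v brk X (J *v Y)"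
    using assms by (simp add: cstructs_def)
  then have "cplx (brk (J *v X) (J *v Y)) = cplx (brk X Y + J *v brk (J *v X) Y + J *v brk X (J *v Y))"
    by simp
  then show ?thesis
    by (simp add: nijenhuis_def JC_eq cplx_add cplx_brk flip: cplx_matrix_vector_mult)
qed

lemma nijenhuis_eq_0:
  assumes "J \<in> cstructs"
  shows "nijenhuis J U V = 0"
proof -
  obtain X Y where U: "U = cplx X + \<i> *s cplx Y"
    using cplx_decompose by blast
  obtain X' Y' where V: "V = cplx X' + \<i> *s cplx Y'"
    using cplx_decompose by blast
  show ?thesis
    by (simp add: U V nijenhuis_add_left nijenhuis_add_right nijenhuis_smult_left
        nijenhuis_smult_right nijenhuis_cplx_eq_0[OF assms])
qed

lemma brk_antiholomorphic:
  assumes "J \<in> cstructs" and U: "JC J U = (- \<i>) *s U" and V: "JC J V = (- \<i>) *s V"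
  shows "JC J (brk U V) = (- \<i>) *s brk U V"
proof -
  have "nijenhuis J U V = 2 *s (\<i> *s JC J (brk U V) - brk U V)"
    unfolding nijenhuis_def U V by (simp add: JC_eq vector_scalar_commute vec_eq_iff algebra_simps)
  then have "\<i> *s JC J (brk U V) = brk U V"
    using nijenhuis_eq_0[OF assms(1)] by (simp add: vec_eq_iff)
  moreover have "JC J (brk U V) = (- \<i>) *s (\<i> *s JC J (brk U V))"
    by (simp add: vector_smult_assoc)
  ultimately show ?thesis
    by simp
qed

lemma annihilator_L10_antiholomorphic:
  assumes J: "J ** J = - mat 1" and U: "\<forall>\<alpha>\<in>L10 J. ev \<alpha> U = 0"
  shows "JC J U = (- \<i>) *s U"
proof -
  let ?M = "map_matrix of_real J :: complex^6^6"
  have MM: "?M ** ?M = - mat 1"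
    using J by (simp add: map_matrix_of_real_mult[symmetric] vec_eq_iff mat_def)
  have "ev \<alpha> (JC J U + \<i> *s U) = 0" for \<alpha>
  proof -
    \<comment> \<open>\<beta> is twice the (1,0)-part of \<alpha>\<close>
    define \<beta> where "\<beta> = \<alpha> - \<i> *s (\<alpha> v* ?M)"
    have "\<beta> v* ?M = \<i> *s \<beta>"
      by (simp add: \<beta>_def vector_matrix_mul_assoc MM scalar_vector_matrix_assoc algebra_simps)
    then have "ev \<beta> U = 0"
      using U by (simp add: L10_iff)
    have "ev \<alpha> (JC J U + \<i> *s U) = ev (\<alpha> v* ?M + \<i> *s \<alpha>) U"
      by (simp add: JC_eq ev_matrix_vector_mult)
    also have "\<alpha> v* ?M + \<i> *s \<alpha> = \<i> *s \<beta>"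
      by (simp add: \<beta>_def vec_eq_iff algebra_simps)
    finally show ?thesis
      using \<open>ev \<beta> U = 0\<close> by simp
  qed
  then have "JC J U + \<i> *s U = 0"
    by (rule ev_eq_0_imp_eq_0)
  then show ?thesis
    by (simp add: vec_eq_iff add_eq_0_iff2)
qed

lemma L10_annihilates_brk:
  assumes J: "J \<in> cstructs" and \<phi>: "\<phi> \<in> L10 J"
    and U: "\<forall>\<alpha>\<in>L10 J. ev \<alpha> U = 0" and V: "\<forall>\<alpha>\<in>L10 J. ev \<alpha> V = 0"
  shows "ev \<phi> (brk U V) = 0"
proof -
  have JJ: "J ** J = - mat 1"
    using J by (simp add: cstructs_def)
  have "JC J (brk U V) = (- \<i>) *s brk U V"
    using brk_antiholomorphic[OF J annihilator_L10_antiholomorphic[OF JJ U]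
        annihilator_L10_antiholomorphic[OF JJ V]] .
  then have "ev \<phi> (JC J (brk U V)) = - \<i> * ev \<phi> (brk U V)"
    by simp
  moreover have "ev \<phi> (JC J (brk U V)) = \<i> * ev \<phi> (brk U V)"
    using \<phi> by (simp add: JC_eq ev_matrix_vector_mult L10_iff)
  ultimately show ?thesis
    by simp
qed

lemma integrable_deformation_coeff_5:
  assumes J: "J \<in> cstructs"
    and L: "L10 J = cspan3 (om1 + cvec \<tau>1) (cvec om2 + cvec \<tau>2) (cvec om3 + cvec \<tau>3)"
    and \<tau>: "\<tau>1 \<in> cspan3 om1 (cvec om2) (cvec om3)" "\<tau>2 \<in> cspan3 om1 (cvec om2) (cvec om3)"
      "\<tau>3 \<in> cspan3 om1 (cvec om2) (cvec om3)"
  shows "\<tau>1 $ 5 = 0"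
proof -
  obtain a1 b1 c1 where \<tau>1: "\<tau>1 = a1 *s om1 + b1 *s cvec om2 + c1 *s cvec om3"
    using \<tau>(1) by (auto simp: cspan3_def)
  obtain a2 b2 c2 where \<tau>2: "\<tau>2 = a2 *s om1 + b2 *s cvec om2 + c2 *s cvec om3"
    using \<tau>(2) by (auto simp: cspan3_def)
  obtain a3 b3 c3 where \<tau>3: "\<tau>3 = a3 *s om1 + b3 *s cvec om2 + c3 *s cvec om3"
    using \<tau>(3) by (auto simp: cspan3_def)
  \<comment> \<open>Vectors are coefficient vectors like forms, and ev pairs \<omega>j with conj \<omega>k to 2\<delta>jk and
    \<omega>j with \<omega>k to 0; by this duality U2, U3 annihilate the three (1,0)-forms spanning L10 J.\<close>
  define U2 where "U2 = cvec om2 - cnj b1 *s cvec om1 - cnj b2 *s om2 - cnj b3 *s om3"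
  define U3 where "U3 = cvec om3 - cnj c1 *s cvec om1 - cnj c2 *s om2 - cnj c3 *s om3"
  have ann: "\<forall>\<alpha>\<in>L10 J. ev \<alpha> U2 = 0" "\<forall>\<alpha>\<in>L10 J. ev \<alpha> U3 = 0"
    by (auto simp: L cspan3_def \<tau>1 \<tau>2 \<tau>3 U2_def U3_def ev_cvec_left)
  have "om1 + cvec \<tau>1 \<in> L10 J"
    unfolding L cspan3_def by (force intro: exI[of _ 1] exI[of _ 0])
  then have "ev (om1 + cvec \<tau>1) (brk U2 U3) = 0"
    using L10_annihilates_brk[OF J _ ann] by blast
  moreover have "ev (om1 + cvec \<tau>1) (brk U2 U3) = - 4 * cnj c1 ^ 2"
    by (simp add: ev_brk \<tau>1 d1_om U2_def U3_def wedge_def ev_cvec_left power2_eq_square)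
  ultimately have "c1 = 0"
    by simp
  then show ?thesis
    by (simp add: \<tau>1 om1_def om2_def om3_def cvec_def)
qed

lemma has_vector_derivative_eq_0_if_locally_0:
  assumes f: "(f has_vector_derivative f') (at x)"
    and S: "open S" "x \<in> S" and f0: "\<And>y. y \<in> S \<Longrightarrow> f y = 0"
  shows "f' = 0"
proof -
  have "((\<lambda>_. 0) has_vector_derivative f') (at x)"
    by (rule has_vector_derivative_transform_within_open[OF f S]) (simp add: f0)
  then show ?thesis
    using has_vector_derivative_const vector_derivative_unique_at by blast
qed

lemma not_tangent_at:
  assumes L: "L10 J = cspan3 om1 (cvec om2) (cvec om3)" and Th: "Th *v om1 = om3"
  shows "\<not> tangent_at J om1 (cvec om2) (cvec om3) Th"
proof
  assume "tangent_at J om1 (cvec om2) (cvec om3) Th"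
  then obtain \<epsilon> :: real and \<tau>1 \<tau>2 \<tau>3 :: "real \<Rightarrow> complex^6" and \<sigma>1 where
    "\<epsilon> > 0" and
    \<tau>: "\<And>t. t \<in> {-\<epsilon><..<\<epsilon>} \<Longrightarrow> \<tau>1 t \<in> L10 J \<and> \<tau>2 t \<in> L10 J \<and> \<tau>3 t \<in> L10 J" and
    \<sigma>1: "(\<tau>1 has_vector_derivative \<sigma>1) (at 0)" "cvec \<sigma>1 = Th *v om1" and
    J: "\<And>t. t \<in> {-\<epsilon><..<\<epsilon>} \<Longrightarrow> \<exists>J'\<in>cstructs.
          L10 J' = cspan3 (om1 + cvec (\<tau>1 t)) (cvec om2 + cvec (\<tau>2 t)) (cvec om3 + cvec (\<tau>3 t))"
    unfolding tangent_at_def by blast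
  have coeff_0: "\<tau>1 t $ 5 = 0" if "t \<in> {-\<epsilon><..<\<epsilon>}" for t
    using J[OF that] \<tau>[OF that] integrable_deformation_coeff_5 by (auto simp: L)
  have "((\<lambda>t. \<tau>1 t $ 5) has_vector_derivative \<sigma>1 $ 5) (at 0)"
    using bounded_linear.has_vector_derivative[OF bounded_linear_vec_nth \<sigma>1(1)] .
  then have "\<sigma>1 $ 5 = 0"
    using has_vector_derivative_eq_0_if_locally_0 open_greaterThanLessThan coeff_0 \<open>\<epsilon> > 0\<close>
    by (metis greaterThanLessThan_iff neg_less_0_iff_less)
  moreover have "cnj (\<sigma>1 $ 5) = 1"
    using arg_cong[OF \<sigma>1(2), of "\<lambda>v. v $ 5"] Th by (simp add: cvec_def om3_def)
  ultimately show False
    by simp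
qed

theorem lemma4p3:
  fixes J1 :: "real ^ 6 ^ 6" and Th :: "complex ^ 6 ^ 6"
  assumes "J1 \<in> cstructs"
    and "L10 J1 = cspan3 om1 (cvec om2) (cvec om3)"
    and "Th *v om1 = om3" and "Th *v cvec om2 = 0" and "Th *v cvec om3 = 0"
    and "Th *v cvec om1 = 0" and "Th *v om2 = 0" and "Th *v om3 = 0"
  shows "(\<forall>\<eta>\<in>L10 J1. \<forall>X Y. dbar_theta J1 Th \<eta> X Y = 0)
         \<and> \<not> tangent_at J1 om1 (cvec om2) (cvec om3) Th"
  using dbar_theta_eq_0[OF assms(2,3,6,4,5)] not_tangent_at[OF assms(2,3)] by blast

end
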